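(* In the setting described in the context, assume $n_0-d(k_0)>4$. For each $\delta>0$ there exists a constant $\gamma_\delta>0$ such that when $\lambda\in\big[\gamma_\delta\sigma_0^2/(\sqrt{1+\frac23\gamma_\delta^{1/4}}-1),\ n_0\gamma_\delta^{1/4}\frac{C_{\min}}{6}\big]$, $$\mathbb P(k_0\notin\mathcal S_B)\le\Big(1-\frac{\gamma_\delta^{n_0-1}}{n_0-1}\Big)^B+\delta.$$
   Context: Let $n_0\ge1$, $n\ge0$ be integers. For each $k\in\{0,\dots,n\}$, $\mathbf X_k\in\{0,1\}^{n_0\times d(k)}$ has standard basis row vectors as rows and nonzero columns (indicators of a partition of $\{1,\dots,n_0\}$ into $d(k)$ blocks), the partition for $k+1$ refining that for $k$. Observation: $\mathbf Y=\mathbf X_{k_0}\boldsymbol\beta^0+\sigma_0\mathbf U$, $\mathbf U\sim\mathcal N(0,\mathbf I_{n_0})$, $k_0\in\{0,\dots,n\}$, $\boldsymbol\beta^0\in\mathbb R^{d(k_0)}$, $\sigma_0>0$, where $k_0$ is the smallest $k$ with $\mathbf X_k\boldsymbol\beta=\mathbf X_{k_0}\boldsymbol\beta^0$ for some $\boldsymbol\beta$. $C_{\min}=\min_{0\le k<k_0}\inf_{\boldsymbol\beta\in\mathbb R^{d(k)}}\|\mathbf X_{k_0}\boldsymbol\beta^0-\mathbf X_k\boldsymbol\beta\|_2^2/(n_0(k_0-k))$. Candidate set: $\mathbf U^*_1,\dots,\mathbf U^*_B$ i.i.d. $\mathcal N(0,\mathbf I_{n_0})$ independent of $\mathbf U$;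 $\hat k_b$ minimizes over $k\in\{0,\dots,n\}$ the value $\min_{\boldsymbol\beta\in\mathbb R^{d(k)},\sigma\in\mathbb R}\{\|\mathbf Y-\mathbf X_k\boldsymbol\beta-\sigma\mathbf U^*_b\|_2^2+\lambda k\}$; $\mathcal S_B=\{\hat k_1,\dots,\hat k_B\}$. *)

theory Defs
  imports "HOL-Probability.Probability"
begin

text \<open>Vectors in R^m are functions nat => real, only indices < m matter.
  The design X_k (rows = standard basis vectors) is encoded by its label function g k:
  row i of X_k is the basis vector e_(g k i), so (X_k beta)_i = beta (g k i).\<close>

definition sqnorm :: "nat \<Rightarrow> (nat \<Rightarrow> real) \<Rightarrow> real" where
  "sqnorm m v = (\<Sum>i<m. (v i)^2)"

definition Xmul :: "(nat \<Rightarrow> nat \<Rightarrow> nat) \<Rightarrow> nat \<Rightarrow> (nat \<Rightarrow> real) \<Rightarrow> nat \<Rightarrow> real" where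
  "Xmul g k \<beta> i = \<beta> (g k i)"

text \<open>Nested partition designs: X_k is n0 x d(k), every row a standard basis vector,
  no zero column, partition of k+1 refines that of k.\<close>
definition nested_designs :: "nat \<Rightarrow> nat \<Rightarrow> (nat \<Rightarrow> nat) \<Rightarrow> (nat \<Rightarrow> nat \<Rightarrow> nat) \<Rightarrow> bool" where
  "nested_designs n0 n d g \<longleftrightarrow>
     (\<forall>k\<le>n. g k ` {..<n0} = {..<d k}) \<and>
     (\<forall>k<n. \<forall>i<n0. \<forall>j<n0. g (Suc k) i = g (Suc k) j \<longrightarrow> g k i = g k j)"

definition minimal_k0 :: "nat \<Rightarrow> (nat \<Rightarrow> nat \<Rightarrow> nat) \<Rightarrow> nat \<Rightarrow> (nat \<Rightarrow> real) \<Rightarrow> bool" where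
  "minimal_k0 n0 g k0 \<beta>0 \<longleftrightarrow>
     (\<forall>k<k0. \<not> (\<exists>\<beta>. \<forall>i<n0. Xmul g k \<beta> i = Xmul g k0 \<beta>0 i))"

text \<open>C_min (only meaningful for k0 > 0; for k0 = 0 it is the empty minimum = +infinity).\<close>
definition Cmin :: "nat \<Rightarrow> (nat \<Rightarrow> nat \<Rightarrow> nat) \<Rightarrow> nat \<Rightarrow> (nat \<Rightarrow> real) \<Rightarrow> real" where
  "Cmin n0 g k0 \<beta>0 = Min ((\<lambda>k. (INF \<beta>. sqnorm n0 (\<lambda>i. Xmul g k0 \<beta>0 i - Xmul g k \<beta> i))
                                 / (real n0 * real (k0 - k))) ` {..<k0})"

definition obj :: "nat \<Rightarrow> (nat \<Rightarrow> nat \<Rightarrow> nat) \<Rightarrow> real \<Rightarrow> (nat \<Rightarrow> real) \<Rightarrow> (nat \<Rightarrow> real) \<Rightarrow> nat \<Rightarrow> real" where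
  "obj n0 g lam Y Us k =
     (INF p\<in>(UNIV :: ((nat \<Rightarrow> real) \<times> real) set).
        sqnorm n0 (\<lambda>i. Y i - Xmul g k (fst p) i - snd p * Us i)) + lam * real k"

definition khat :: "nat \<Rightarrow> nat \<Rightarrow> (nat \<Rightarrow> nat \<Rightarrow> nat) \<Rightarrow> real \<Rightarrow> (nat \<Rightarrow> real) \<Rightarrow> (nat \<Rightarrow> real) \<Rightarrow> nat" where
  "khat n0 n g lam Y Us = (LEAST k. k \<le> n \<and> (\<forall>k'\<le>n. obj n0 g lam Y Us k \<le> obj n0 g lam Y Us k'))"

text \<open>Sample space: omega (0,i) = U_i, omega (b,i) = U*_b i for 1 <= b <= B, all i.i.d. N(0,1).\<close>
definition gauss_space :: "nat \<Rightarrow> nat \<Rightarrow> ((nat \<times> nat) \<Rightarrow> real) measure" where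
  "gauss_space n0 B = PiM ({..B} \<times> {..<n0}) (\<lambda>_. density lborel std_normal_density)"

definition Yobs :: "nat \<Rightarrow> (nat \<Rightarrow> nat \<Rightarrow> nat) \<Rightarrow> nat \<Rightarrow> (nat \<Rightarrow> real) \<Rightarrow> real \<Rightarrow> ((nat \<times> nat) \<Rightarrow> real) \<Rightarrow> nat \<Rightarrow> real" where
  "Yobs n0 g k0 \<beta>0 \<sigma>0 \<omega> i = Xmul g k0 \<beta>0 i + \<sigma>0 * \<omega> (0, i)"

definition miss_event :: "nat \<Rightarrow> nat \<Rightarrow> (nat \<Rightarrow> nat \<Rightarrow> nat) \<Rightarrow> nat \<Rightarrow> (nat \<Rightarrow> real) \<Rightarrow> real \<Rightarrow> real \<Rightarrow> nat \<Rightarrow> ((nat \<times> nat) \<Rightarrow> real) set" where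
  "miss_event n0 n g k0 \<beta>0 \<sigma>0 lam B =
     {\<omega> \<in> space (gauss_space n0 B).
        k0 \<notin> (\<lambda>b. khat n0 n g lam (Yobs n0 g k0 \<beta>0 \<sigma>0 \<omega>) (\<lambda>i. \<omega> (b, i))) ` {1..B}}"

end

theory Submission
  imports Defs
begin

text \<open>Write \<open>\<omega> (0, \<cdot>) = U\<close> and \<open>\<omega> (b, \<cdot>) = U\<^sup>*\<^sub>b\<close>. Since \<open>d k0 < n0\<close>, two coordinates \<open>i0 \<noteq> j0\<close>
  lie in one block of every \<open>X\<^sub>k\<close> with \<open>k \<le> k0\<close>. Suppose \<open>\<bar>U\<^sub>i\<bar> \<le> M\<close> for all \<open>i\<close>,
  \<open>\<bar>U\<^sub>i\<^sub>0 - U\<^sub>j\<^sub>0\<bar> \<ge> 6 t n0 M\<close>, and some candidate is within \<open>t\<^sup>3 / (2 n0)\<close> of \<open>U\<close> in every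
  coordinate. Then that candidate selects \<open>k0\<close>: a larger model pays at least \<open>\<lambda>\<close> more penalty,
  and for a smaller model \<open>k\<close> every residual \<open>Y - X\<^sub>k \<beta> - \<sigma> U\<^sup>*\<^sub>b\<close> has norm at least
  \<open>t \<surd>D\<^sub>k / 2\<close>, where \<open>D\<^sub>k\<close> is the misfit of \<open>X\<^sub>k\<close> to the mean: if \<open>\<sigma>\<close> is far from \<open>\<sigma>0\<close> the residual
  separates the coordinates \<open>i0\<close> and \<open>j0\<close>, otherwise \<open>D\<^sub>k\<close> dominates; the window for \<open>\<lambda>\<close> makes
  this exceed the penalty saved. So \<open>k0 \<notin> S\<^sub>B\<close> forces \<open>U\<close> to be large, or \<open>U\<^sub>i\<^sub>0\<close> and \<open>U\<^sub>j\<^sub>0\<close> to be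
  close, or all \<open>B\<close> candidates, independent given \<open>U\<close>, to miss the cube around \<open>U\<close>, whose Gaussian
  mass is at least \<open>(t\<^sup>3 \<phi>(M + 1) / n0)\<^sup>n\<^sup>0 \<ge> \<gamma>\<^sup>n\<^sup>0\<^sup>-\<^sup>1 / (n0 - 1)\<close> for \<open>\<gamma> = t\<^sup>8\<close>. Choosing \<open>M\<close>
  and then \<open>t\<close> small makes the first two probabilities at most \<open>3 \<delta> / 4\<close>.\<close>

section \<open>Products of i.i.d. real random variables\<close>

definition far_candidates :: "nat \<Rightarrow> nat \<Rightarrow> real \<Rightarrow> real \<Rightarrow> (nat \<times> nat \<Rightarrow> real) set" where
  "far_candidates m B R h = {\<omega> \<in> {..B} \<times> {..<m} \<rightarrow>\<^sub>E UNIV.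
     (\<forall>i<m. \<bar>\<omega> (0, i)\<bar> \<le> R) \<and> (\<forall>b\<in>{1..B}. \<exists>i<m. h < \<bar>\<omega> (b, i) - \<omega> (0, i)\<bar>)}"

lemma merge_far_candidates_SucD:
  fixes x y :: "nat \<times> nat \<Rightarrow> real" and B m :: nat
  defines "I \<equiv> {..B} \<times> {..<m}" and "J \<equiv> {Suc B} \<times> {..<m}"
  assumes x: "x \<in> I \<rightarrow>\<^sub>E UNIV" and xy: "merge I J (x, y) \<in> far_candidates m (Suc B) R h"
  shows "x \<in> far_candidates m B R h" and "\<exists>i<m. h < \<bar>y (Suc B, i) - x (0, i)\<bar>"
proof -
  have merge_I: "merge I J (x, y) (b, i) = x (b, i)" if "b \<le> B" "i < m" for b i
    using that by (simp add: merge_def I_def)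
  have merge_J: "merge I J (x, y) (Suc B, i) = y (Suc B, i)" if "i < m" for i
    using that by (simp add: merge_def I_def J_def)
  have bounded: "\<bar>x (0, i)\<bar> \<le> R" if "i < m" for i
  proof -
    have "\<bar>merge I J (x, y) (0, i)\<bar> \<le> R"
      using xy that unfolding far_candidates_def by blast
    then show ?thesis
      using merge_I[of 0 i] that by simp
  qed
  have far: "\<exists>i<m. h < \<bar>merge I J (x, y) (b, i) - x (0, i)\<bar>" if "b \<in> {1..Suc B}" for b
  proof -
    have "\<forall>b\<in>{1..Suc B}. \<exists>i<m. h < \<bar>merge I J (x, y) (b, i) - merge I J (x, y) (0, i)\<bar>"
      using xy by (simp add: far_candidates_def)
    from bspec[OF this that]
    obtain i where i: "i < m" "h < \<bar>merge I J (x, y) (b, i) - merge I J (x, y) (0, i)\<bar>"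
      by (elim exE conjE)
    then have "h < \<bar>merge I J (x, y) (b, i) - x (0, i)\<bar>"
      using merge_I[of 0 i] by simp
    with i(1) show ?thesis
      by blast
  qed
  show "x \<in> far_candidates m B R h"
    unfolding far_candidates_def
  proof (intro CollectI conjI allI impI ballI)
    show "x \<in> {..B} \<times> {..<m} \<rightarrow>\<^sub>E UNIV"
      using x by (simp add: I_def)
    show "\<bar>x (0, i)\<bar> \<le> R" if "i < m" for i
      using that by (rule bounded)
    fix b assume b: "b \<in> {1..B}"
    then obtain i where "i < m" "h < \<bar>merge I J (x, y) (b, i) - x (0, i)\<bar>"
      using far[of b] by auto
    then show "\<exists>i<m. h < \<bar>x (b, i) - x (0, i)\<bar>"
      using merge_I[of b i] b by auto
  qed
  obtain i where "i < m" "h < \<bar>merge I J (x, y) (Suc B, i) - x (0, i)\<bar>"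
    using far[of "Suc B"] by auto
  then show "\<exists>i<m. h < \<bar>y (Suc B, i) - x (0, i)\<bar>"
    using merge_J[of i] by auto
qed

locale real_iid = prob_space N for N :: "real measure" +
  assumes sets_N: "sets N = sets borel"
begin

lemma space_N [simp]: "space N = UNIV"
  using sets_eq_imp_space_eq[OF sets_N] by simp

lemma space_PiM_iid: "space (PiM K (\<lambda>_. N)) = K \<rightarrow>\<^sub>E UNIV"
  by (simp add: space_PiM)

lemma prob_space_PiM_iid: "prob_space (PiM K (\<lambda>_. N))"
  by (intro prob_space_PiM prob_space_axioms)

lemma product_sigma_finite_iid: "product_sigma_finite (\<lambda>_. N)"
  by (simp add: product_sigma_finite_def sigma_finite_measure_axioms)

lemma component_borel_measurable [measurable]: "(\<lambda>\<omega>. \<omega> x) \<in> borel_measurable (PiM K (\<lambda>_. N))"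
proof (cases "x \<in> K")
  case True
  then have "(\<lambda>\<omega>. \<omega> x) \<in> PiM K (\<lambda>_. N) \<rightarrow>\<^sub>M N"
    by (rule measurable_component_singleton)
  then show ?thesis
    by (simp add: measurable_cong_sets[OF refl sets_N])
next
  case False
  \<comment> \<open>outside \<open>K\<close> every point of the product space takes the value \<open>undefined\<close>\<close>
  have "(\<lambda>\<omega>. undefined :: real) \<in> borel_measurable (PiM K (\<lambda>_. N))"
    by simp
  then show ?thesis
    by (rule measurable_cong[THEN iffD1, rotated])
      (use False in \<open>auto simp: space_PiM_iid PiE_def extensional_def\<close>)
qed

lemma measure_coordinate_tail_le:
  assumes "finite X" "X \<subseteq> K"
  shows "measure (PiM K (\<lambda>_. N)) {\<omega> \<in> space (PiM K (\<lambda>_. N)). \<exists>x\<in>X. R < \<bar>\<omega> x\<bar>}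
    \<le> card X * measure N {y. R < \<bar>y\<bar>}"
proof -
  interpret P: product_prob_space "\<lambda>_. N" K
    by (intro product_prob_spaceI) (rule prob_space_axioms)
  have tail: "{y. R < \<bar>y\<bar>} \<in> sets N"
    unfolding sets_N by measurable
  have "{\<omega> \<in> space (PiM K (\<lambda>_. N)). \<exists>x\<in>X. R < \<bar>\<omega> x\<bar>}
      = (\<Union>x\<in>X. {\<omega> \<in> space (PiM K (\<lambda>_. N)). \<omega> x \<in> {y. R < \<bar>y\<bar>}})"
    by auto
  also have "measure (PiM K (\<lambda>_. N)) \<dots>
      \<le> (\<Sum>x\<in>X. measure (PiM K (\<lambda>_. N)) {\<omega> \<in> space (PiM K (\<lambda>_. N)). \<omega> x \<in> {y. R < \<bar>y\<bar>}})"
    using assms(1) by (intro P.finite_measure_subadditive_finite) auto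
  also have "\<dots> = (\<Sum>x\<in>X. measure N {y. R < \<bar>y\<bar>})"
  proof (intro sum.cong refl)
    fix x assume "x \<in> X"
    then have "emeasure (PiM K (\<lambda>_. N)) {\<omega> \<in> space (PiM K (\<lambda>_. N)). \<omega> x \<in> {y. R < \<bar>y\<bar>}}
        = emeasure N {y. R < \<bar>y\<bar>}"
      using assms(2) tail by (intro P.emeasure_PiM_Collect_single) auto
    then show "measure (PiM K (\<lambda>_. N)) {\<omega> \<in> space (PiM K (\<lambda>_. N)). \<omega> x \<in> {y. R < \<bar>y\<bar>}}
        = measure N {y. R < \<bar>y\<bar>}"
      by (simp add: measure_def)
  qed
  finally show ?thesis
    by simp
qed

lemma emeasure_coordinate_diff_le:
  assumes K: "finite K" "x \<in> K" "y \<in> K" "x \<noteq> y"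
    and interval: "\<And>c. emeasure N {c - s<..<c + s} \<le> e"
  shows "emeasure (PiM K (\<lambda>_. N)) {\<omega> \<in> space (PiM K (\<lambda>_. N)). \<bar>\<omega> x - \<omega> y\<bar> < s} \<le> e"
proof -
  interpret P: product_sigma_finite "\<lambda>_. N"
    by (rule product_sigma_finite_iid)
  interpret P': prob_space "PiM (K - {x}) (\<lambda>_. N)"
    by (rule prob_space_PiM_iid)
  let ?A = "{\<omega> \<in> space (PiM K (\<lambda>_. N)). \<bar>\<omega> x - \<omega> y\<bar> < s}"
  have "?A \<in> sets (PiM K (\<lambda>_. N))"
    by measurable
  then have "emeasure (PiM K (\<lambda>_. N)) ?A = (\<integral>\<^sup>+ z. emeasure (PiM {x} (\<lambda>_. N))
      ((\<lambda>w. merge (K - {x}) {x} (z, w)) -` ?A \<inter> space (PiM {x} (\<lambda>_. N))) \<partial>PiM (K - {x}) (\<lambda>_. N))"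
    using P.emeasure_fold_integral[of "K - {x}" "{x}" ?A] K by (simp add: insert_absorb)
  also have "\<dots> \<le> (\<integral>\<^sup>+ z. e \<partial>PiM (K - {x}) (\<lambda>_. N))"
  proof (intro nn_integral_mono)
    fix z assume "z \<in> space (PiM (K - {x}) (\<lambda>_. N))"
    have "(\<lambda>w. merge (K - {x}) {x} (z, w)) -` ?A \<inter> space (PiM {x} (\<lambda>_. N))
        \<subseteq> PiE {x} (\<lambda>_. {z y - s<..<z y + s})"
      using K by (auto simp: merge_def space_PiM_iid PiE_iff split: if_splits)
    then have "emeasure (PiM {x} (\<lambda>_. N)) ((\<lambda>w. merge (K - {x}) {x} (z, w)) -` ?A \<inter> space (PiM {x} (\<lambda>_. N)))
        \<le> emeasure (PiM {x} (\<lambda>_. N)) (PiE {x} (\<lambda>_. {z y - s<..<z y + s}))"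
      by (intro emeasure_mono) (auto intro: sets_PiM_I_finite simp: sets_N)
    also have "\<dots> = emeasure N {z y - s<..<z y + s}"
      by (subst P.emeasure_PiM) (auto simp: sets_N)
    finally show "emeasure (PiM {x} (\<lambda>_. N)) ((\<lambda>w. merge (K - {x}) {x} (z, w)) -` ?A \<inter> space (PiM {x} (\<lambda>_. N)))
        \<le> e"
      using interval order_trans by blast
  qed
  also have "\<dots> = e"
    using P'.emeasure_space_1 by simp
  finally show ?thesis .
qed

lemma measure_PiM_row_box:
  fixes b m :: nat
  assumes "\<And>i. i < m \<Longrightarrow> F i \<in> sets borel"
  shows "measure (PiM ({b} \<times> {..<m}) (\<lambda>_. N)) (PiE ({b} \<times> {..<m}) (\<lambda>j. F (snd j)))
    = (\<Prod>i<m. measure N (F i))"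
proof -
  interpret P: product_sigma_finite "\<lambda>_::nat \<times> nat. N"
    by (rule product_sigma_finite_iid)
  interpret PB: prob_space "PiM ({b} \<times> {..<m}) (\<lambda>_. N)"
    by (rule prob_space_PiM_iid)
  have "emeasure (PiM ({b} \<times> {..<m}) (\<lambda>_. N)) (PiE ({b} \<times> {..<m}) (\<lambda>j. F (snd j)))
      = (\<Prod>j\<in>{b} \<times> {..<m}. emeasure N (F (snd j)))"
    by (rule P.emeasure_PiM) (use assms in \<open>auto simp: sets_N\<close>)
  also have "\<dots> = (\<Prod>i<m. emeasure N (F i))"
    by (rule prod.reindex_bij_witness[where i = "\<lambda>i. (b, i)" and j = snd]) auto
  also have "\<dots> = ennreal (\<Prod>i<m. measure N (F i))"
    by (simp add: emeasure_eq_measure prod_ennreal)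
  finally show ?thesis
    by (simp add: PB.emeasure_eq_measure prod_nonneg)
qed

lemma sets_far_candidates: "far_candidates m B R h \<in> sets (PiM ({..B} \<times> {..<m}) (\<lambda>_. N))"
proof -
  have "far_candidates m B R h = {\<omega> \<in> space (PiM ({..B} \<times> {..<m}) (\<lambda>_. N)).
      (\<forall>i<m. \<bar>\<omega> (0, i)\<bar> \<le> R) \<and> (\<forall>b\<in>{1..B}. \<exists>i<m. h < \<bar>\<omega> (b, i) - \<omega> (0, i)\<bar>)}"
    by (simp add: far_candidates_def space_PiM_iid)
  also have "\<dots> \<in> sets (PiM ({..B} \<times> {..<m}) (\<lambda>_. N))"
    by measurable
  finally show ?thesis .
qed

lemma emeasure_far_candidates_section_le:
  fixes x :: "nat \<times> nat \<Rightarrow> real" and B m :: nat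
  defines "I \<equiv> {..B} \<times> {..<m}" and "J \<equiv> {Suc B} \<times> {..<m}"
  assumes x: "x \<in> space (PiM I (\<lambda>_. N))"
    and box: "\<And>c. (\<And>i. i < m \<Longrightarrow> \<bar>c i\<bar> \<le> R) \<Longrightarrow> p \<le> (\<Prod>i<m. measure N {c i - h..c i + h})"
  shows "emeasure (PiM J (\<lambda>_. N))
      ((\<lambda>y. merge I J (x, y)) -` far_candidates m (Suc B) R h \<inter> space (PiM J (\<lambda>_. N)))
    \<le> ennreal (1 - p) * indicator (far_candidates m B R h) x"
proof -
  interpret PJ: prob_space "PiM J (\<lambda>_. N)"
    by (rule prob_space_PiM_iid)
  let ?S = "(\<lambda>y. merge I J (x, y)) -` far_candidates m (Suc B) R h \<inter> space (PiM J (\<lambda>_. N))"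
  have x': "x \<in> I \<rightarrow>\<^sub>E UNIV"
    using x by (simp add: space_PiM_iid)
  show ?thesis
  proof (cases "x \<in> far_candidates m B R h")
    case False
    then have "?S = {}"
      using merge_far_candidates_SucD(1)[OF x'[unfolded I_def]] by (auto simp: I_def J_def)
    then show ?thesis
      by simp
  next
    case True
    define box where "box = PiE J (\<lambda>j. {x (0, snd j) - h..x (0, snd j) + h})"
    have box_sets: "box \<in> sets (PiM J (\<lambda>_. N))"
      unfolding box_def J_def by (intro sets_PiM_I_finite) (auto simp: sets_N)
    have "?S \<subseteq> space (PiM J (\<lambda>_. N)) - box"
    proof safe
      fix y assume "merge I J (x, y) \<in> far_candidates m (Suc B) R h" "y \<in> box"
      moreover obtain i where "i < m" "h < \<bar>y (Suc B, i) - x (0, i)\<bar>"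
        using merge_far_candidates_SucD(2)[OF x'[unfolded I_def]] calculation(1)
        unfolding I_def J_def by blast
      moreover have "y (Suc B, i) \<in> {x (0, i) - h..x (0, i) + h}"
        using calculation(2,3) by (auto simp: box_def J_def PiE_iff)
      ultimately show False
        by auto
    qed
    then have "emeasure (PiM J (\<lambda>_. N)) ?S \<le> emeasure (PiM J (\<lambda>_. N)) (space (PiM J (\<lambda>_. N)) - box)"
      using box_sets by (intro emeasure_mono) auto
    also have "\<dots> = ennreal (1 - measure (PiM J (\<lambda>_. N)) box)"
      using box_sets by (simp add: PJ.emeasure_eq_measure PJ.prob_compl)
    also have "\<dots> \<le> ennreal (1 - p)"
    proof (intro ennreal_leI diff_left_mono)
      have "p \<le> (\<Prod>i<m. measure N {x (0, i) - h..x (0, i) + h})"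
        using True by (intro box) (auto simp: far_candidates_def)
      also have "\<dots> = measure (PiM J (\<lambda>_. N)) box"
        unfolding box_def J_def by (rule measure_PiM_row_box[symmetric]) simp
      finally show "p \<le> measure (PiM J (\<lambda>_. N)) box" .
    qed
    finally show ?thesis
      using True by simp
  qed
qed

lemma box_bound_le_1:
  assumes "0 \<le> R"
    and box: "\<And>c. (\<And>i. i < m \<Longrightarrow> \<bar>c i\<bar> \<le> R) \<Longrightarrow> p \<le> (\<Prod>i<m. measure N {c i - h..c i + h})"
  shows "p \<le> 1"
proof -
  have "p \<le> (\<Prod>i<m. measure N {0 - h..0 + h})"
    using box[of "\<lambda>_. 0"] assms(1) by simp
  also have "\<dots> \<le> 1"
    by (intro prod_le_1) auto
  finally show ?thesis .
qed

lemma emeasure_far_candidates_le: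
  assumes "0 \<le> R"
    and box: "\<And>c. (\<And>i. i < m \<Longrightarrow> \<bar>c i\<bar> \<le> R) \<Longrightarrow> p \<le> (\<Prod>i<m. measure N {c i - h..c i + h})"
  shows "emeasure (PiM ({..B} \<times> {..<m}) (\<lambda>_. N)) (far_candidates m B R h) \<le> ennreal ((1 - p)^B)"
proof (induction B)
  case 0
  show ?case
    using prob_space.emeasure_le_1[OF prob_space_PiM_iid[of "{0} \<times> {..<m}"]] by simp
next
  case (Suc B)
  interpret P: product_sigma_finite "\<lambda>_::nat \<times> nat. N"
    by (rule product_sigma_finite_iid)
  define I where "I = {..B} \<times> {..<m}"
  define J where "J = {Suc B} \<times> {..<m}"
  have IJ: "I \<inter> J = {}" "finite I" "finite J" "I \<union> J = {..Suc B} \<times> {..<m}"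
    by (auto simp: I_def J_def)
  have "p \<le> 1"
    using assms(1) box by (rule box_bound_le_1)
  have "emeasure (PiM ({..Suc B} \<times> {..<m}) (\<lambda>_. N)) (far_candidates m (Suc B) R h)
      = (\<integral>\<^sup>+ x. emeasure (PiM J (\<lambda>_. N))
          ((\<lambda>y. merge I J (x, y)) -` far_candidates m (Suc B) R h \<inter> space (PiM J (\<lambda>_. N)))
        \<partial>PiM I (\<lambda>_. N))"
    using P.emeasure_fold_integral[OF IJ(1-3), of "far_candidates m (Suc B) R h"] IJ(4)
      sets_far_candidates by simp
  also have "\<dots> \<le> (\<integral>\<^sup>+ x. ennreal (1 - p) * indicator (far_candidates m B R h) x \<partial>PiM I (\<lambda>_. N))"
    unfolding I_def J_def by (intro nn_integral_mono emeasure_far_candidates_section_le[OF _ box])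
  also have "\<dots> = ennreal (1 - p) * emeasure (PiM I (\<lambda>_. N)) (far_candidates m B R h)"
    using sets_far_candidates unfolding I_def by (rule nn_integral_cmult_indicator)
  also have "\<dots> \<le> ennreal (1 - p) * ennreal ((1 - p)^B)"
    using Suc.IH unfolding I_def by (rule mult_left_mono) simp
  also have "\<dots> = ennreal ((1 - p)^Suc B)"
    using \<open>p \<le> 1\<close> by (simp add: mult.commute flip: ennreal_mult)
  finally show ?case .
qed

lemma measure_far_candidates_le:
  assumes "0 \<le> R"
    and box: "\<And>c. (\<And>i. i < m \<Longrightarrow> \<bar>c i\<bar> \<le> R) \<Longrightarrow> p \<le> (\<Prod>i<m. measure N {c i - h..c i + h})"
  shows "measure (PiM ({..B} \<times> {..<m}) (\<lambda>_. N)) (far_candidates m B R h) \<le> (1 - p)^B"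
proof -
  interpret P: prob_space "PiM ({..B} \<times> {..<m}) (\<lambda>_. N)"
    by (rule prob_space_PiM_iid)
  have "p \<le> 1"
    using assms(1) box by (rule box_bound_le_1)
  then show ?thesis
    using emeasure_far_candidates_le[OF assms, of B] by (simp add: P.emeasure_eq_measure)
qed

lemma tail_measure_small:
  assumes "0 < \<epsilon>"
  obtains R where "1 \<le> R" "measure N {x. R < \<bar>x\<bar>} \<le> \<epsilon>"
proof -
  define A where "A k = {x::real. real k < \<bar>x\<bar>}" for k
  have A_sets: "A k \<in> sets N" for k
    unfolding A_def sets_N by measurable
  have "x \<notin> A (nat \<lceil>\<bar>x\<bar>\<rceil>)" for x
    unfolding A_def by (simp add: not_less)
  then have "(\<Inter>k. A k) = {}"
    by blast
  moreover have "(\<lambda>k. measure N (A k)) \<longlonglongrightarrow> measure N (\<Inter>k. A k)"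
    using A_sets by (intro finite_Lim_measure_decseq) (auto simp: A_def decseq_def)
  ultimately have "\<forall>\<^sub>F k in sequentially. measure N (A k) < \<epsilon>"
    using assms by (simp add: order_tendstoD)
  then obtain k where k: "measure N (A k) < \<epsilon>"
    by (auto simp: eventually_sequentially)
  have "measure N {x. real k + 1 < \<bar>x\<bar>} \<le> measure N (A k)"
    using A_sets by (intro finite_measure_mono) (auto simp: A_def)
  with k that[of "real k + 1"] show ?thesis
    by simp
qed

end

section \<open>The standard normal distribution\<close>

interpretation std_normal: real_iid std_normal_distribution
  using real_dist_normal_dist by (simp add: real_iid_def real_iid_axioms_def real_distribution_def)

lemma emeasure_std_normal:
  "A \<in> sets borel \<Longrightarrow>
    emeasure std_normal_distribution A = (\<integral>\<^sup>+ x. ennreal (std_normal_density x) * indicator A x \<partial>lborel)"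
  by (rule emeasure_density) auto

lemma std_normal_density_le_half: "std_normal_density x \<le> 1/2"
proof -
  have "2 \<le> sqrt (2 * pi)"
    using pi_gt3 by (intro real_le_rsqrt) simp
  then have "1 / sqrt (2 * pi) \<le> 1/2"
    by (simp add: divide_le_cancel)
  then have "1 / sqrt (2 * pi) * exp (- x\<^sup>2 / 2) \<le> 1/2 * 1"
    by (intro mult_mono) auto
  then show ?thesis
    by (simp add: std_normal_density_def)
qed

lemma std_normal_interval_lower:
  assumes "\<bar>a\<bar> \<le> R" "0 < h" "h \<le> 1"
  shows "2 * h * std_normal_density (R + 1) \<le> measure std_normal_distribution {a-h..a+h}"
proof -
  let ?c = "std_normal_density (R + 1)"
  have "ennreal ?c * indicator {a-h..a+h} x \<le> ennreal (std_normal_density x) * indicator {a-h..a+h} x" for x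
  proof (cases "x \<in> {a-h..a+h}")
    case True
    then have "\<bar>x\<bar> \<le> \<bar>R + 1\<bar>"
      using assms by auto
    then have "x\<^sup>2 \<le> (R + 1)\<^sup>2"
      by (simp add: abs_le_square_iff)
    then show ?thesis
      using True by (auto simp: std_normal_density_def intro!: ennreal_leI divide_right_mono)
  qed simp
  then have "ennreal ?c * emeasure lborel {a-h..a+h} \<le> emeasure std_normal_distribution {a-h..a+h}"
    by (simp add: emeasure_std_normal flip: nn_integral_cmult_indicator) (rule nn_integral_mono)
  moreover have "ennreal ?c * emeasure lborel {a-h..a+h} = ennreal (2 * h * ?c)"
    using assms by (simp add: ennreal_mult' mult.commute)
  ultimately show ?thesis
    by (simp add: std_normal.emeasure_eq_measure ennreal_le_iff)
qed

lemma std_normal_interval_upper: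
  assumes "0 < s"
  shows "emeasure std_normal_distribution {c-s<..<c+s} \<le> s"
proof -
  have "ennreal (std_normal_density x) \<le> ennreal (1/2)" for x
    using std_normal_density_le_half by (rule ennreal_leI)
  then have "emeasure std_normal_distribution {c-s<..<c+s}
      \<le> (\<integral>\<^sup>+ x. ennreal (1/2) * indicator {c-s<..<c+s} x \<partial>lborel)"
    by (subst emeasure_std_normal) (auto intro!: nn_integral_mono simp: indicator_def)
  also have "\<dots> = ennreal (1/2) * ennreal (2 * s)"
    using assms by (subst nn_integral_cmult_indicator) auto
  also have "\<dots> = ennreal s"
    using assms by (subst ennreal_mult[symmetric]) auto
  finally show ?thesis .
qed

lemma std_normal_box_lower:
  assumes "\<And>i. i < m \<Longrightarrow> \<bar>c i\<bar> \<le> R" "0 < h" "h \<le> 1"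
  shows "(2 * h * std_normal_density (R + 1))^m \<le> (\<Prod>i<m. measure std_normal_distribution {c i - h..c i + h})"
proof -
  have "(2 * h * std_normal_density (R + 1))^m = (\<Prod>i<m. 2 * h * std_normal_density (R + 1))"
    by simp
  also have "\<dots> \<le> (\<Prod>i<m. measure std_normal_distribution {c i - h..c i + h})"
    using assms by (intro prod_mono conjI std_normal_interval_lower) auto
  finally show ?thesis .
qed

section \<open>Lower bounds for residuals\<close>

lemma sqnorm_eq_L2_set: "sqnorm m v = (L2_set v {..<m})\<^sup>2"
  unfolding sqnorm_def L2_set_def by (simp add: sum_nonneg)

lemma sqnorm_nonneg: "0 \<le> sqnorm m v"
  unfolding sqnorm_def by (simp add: sum_nonneg)

lemma L2_set_cmult: "L2_set (\<lambda>i. c * f i) A = \<bar>c\<bar> * L2_set f A"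
  unfolding L2_set_def by (simp add: power_mult_distrib real_sqrt_mult flip: sum_distrib_left)

lemma abs_le_L2_set: "finite A \<Longrightarrow> i \<in> A \<Longrightarrow> \<bar>f i\<bar> \<le> L2_set f A"
  using member_le_L2_set[of A i "\<lambda>i. \<bar>f i\<bar>"] by (simp add: L2_set_def)

lemma L2_set_le_card_mult:
  fixes f :: "'a \<Rightarrow> real"
  assumes "\<And>i. i \<in> A \<Longrightarrow> \<bar>f i\<bar> \<le> c"
  shows "L2_set f A \<le> real (card A) * c"
proof -
  have "L2_set f A \<le> (\<Sum>i\<in>A. \<bar>f i\<bar>)"
    by (rule L2_set_le_sum_abs)
  also have "\<dots> \<le> real (card A) * c"
    by (rule sum_bounded_above) (rule assms)
  finally show ?thesis .
qed

lemma diff_square_le_L2_set: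
  assumes "finite A" "i \<in> A" "j \<in> A" "i \<noteq> j"
  shows "(f i - f j)\<^sup>2 \<le> 2 * (L2_set f A)\<^sup>2"
proof -
  have "(f i - f j)\<^sup>2 + (f i + f j)\<^sup>2 = 2 * ((f i)\<^sup>2 + (f j)\<^sup>2)"
    by (simp add: power2_eq_square algebra_simps)
  then have "(f i - f j)\<^sup>2 \<le> 2 * ((f i)\<^sup>2 + (f j)\<^sup>2)"
    using zero_le_power2[of "f i + f j"] by linarith
  also have "(f i)\<^sup>2 + (f j)\<^sup>2 = (\<Sum>l\<in>{i, j}. (f l)\<^sup>2)"
    using assms(4) by simp
  also have "\<dots> \<le> (\<Sum>l\<in>A. (f l)\<^sup>2)"
    using assms by (intro sum_mono2) auto
  finally show ?thesis
    by (simp add: L2_set_def sum_nonneg)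
qed

lemma residual_lower_bound_small_shift:
  fixes r U V :: "nat \<Rightarrow> real"
  assumes r: "L \<le> L2_set r A" and L: "0 < L"
    and U: "L2_set U A \<le> R" "1 \<le> R" and shift: "\<bar>\<sigma>0 - \<sigma>\<bar> \<le> L / (4 * R)"
    and V: "L2_set (\<lambda>l. V l - U l) A \<le> t^3 / 2"
    and t: "0 \<le> t" "t \<le> 1" and \<sigma>0: "0 \<le> \<sigma>0" "4 * \<sigma>0 * t\<^sup>2 \<le> L"
  shows "L / 2 \<le> L2_set (\<lambda>l. r l + \<sigma>0 * U l - \<sigma> * V l) A"
proof -
  define z where "z = (\<lambda>l. r l + \<sigma>0 * U l - \<sigma> * V l)"
  define W where "W = (\<lambda>l. V l - U l)"
  have "r = (\<lambda>l. z l + (\<sigma> - \<sigma>0) * U l + \<sigma> * W l)"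
    by (auto simp: z_def W_def algebra_simps)
  then have "L2_set r A \<le> L2_set z A + \<bar>\<sigma> - \<sigma>0\<bar> * L2_set U A + \<bar>\<sigma>\<bar> * L2_set W A"
    using L2_set_triangle_ineq[of z "\<lambda>l. (\<sigma> - \<sigma>0) * U l" A]
      L2_set_triangle_ineq[of "\<lambda>l. z l + (\<sigma> - \<sigma>0) * U l" "\<lambda>l. \<sigma> * W l" A]
    by (simp add: L2_set_cmult)
  moreover have "\<bar>\<sigma> - \<sigma>0\<bar> * L2_set U A \<le> L / 4"
  proof -
    have "\<bar>\<sigma> - \<sigma>0\<bar> * L2_set U A \<le> L / (4 * R) * R"
      using shift U by (intro mult_mono) auto
    then show ?thesis
      using U by simp
  qed
  moreover have "\<bar>\<sigma>\<bar> * L2_set W A \<le> L / 4"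
  proof -
    have "L / (4 * R) \<le> L / 4"
      using U L by (intro divide_left_mono) auto
    then have "\<bar>\<sigma>\<bar> \<le> \<sigma>0 + L / 4"
      using shift \<sigma>0 by linarith
    moreover have "t^3 \<le> t\<^sup>2" "t^3 \<le> 1"
      using t by (auto intro: power_decreasing power_le_one)
    ultimately have "\<bar>\<sigma>\<bar> * L2_set W A \<le> (\<sigma>0 + L / 4) * (t^3 / 2)"
      using V by (intro mult_mono) (auto simp: W_def)
    also have "\<dots> = \<sigma>0 * (t^3 / 2) + L / 4 * (t^3 / 2)"
      by (simp add: algebra_simps)
    also have "\<dots> \<le> \<sigma>0 * (t\<^sup>2 / 2) + L / 4 * (1 / 2)"
      using \<open>t^3 \<le> t\<^sup>2\<close> \<open>t^3 \<le> 1\<close> \<sigma>0 L by (intro add_mono mult_left_mono) auto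
    finally show ?thesis
      using \<sigma>0 by simp
  qed
  ultimately show ?thesis
    using r by (simp add: z_def)
qed

lemma residual_lower_bound_large_shift:
  fixes r U V :: "nat \<Rightarrow> real"
  assumes A: "finite A" "i \<in> A" "j \<in> A" "i \<noteq> j" and r: "r i = r j"
    and U: "6 * t * R \<le> \<bar>U i - U j\<bar>" "1 \<le> R" and shift: "L / (4 * R) < \<bar>\<sigma>0 - \<sigma>\<bar>"
    and V: "L2_set (\<lambda>l. V l - U l) A \<le> t^3 / 2"
    and t: "0 < t" "t \<le> 1" and \<sigma>0: "0 \<le> \<sigma>0" "4 * \<sigma>0 * t\<^sup>2 \<le> L"
  shows "t * L / 2 \<le> L2_set (\<lambda>l. r l + \<sigma>0 * U l - \<sigma> * V l) A"
proof -
  define z where "z = (\<lambda>l. r l + \<sigma>0 * U l - \<sigma> * V l)"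
  define W where "W = (\<lambda>l. V l - U l)"
  define a where "a = \<sigma>0 - \<sigma>"
  have "\<bar>W i\<bar> \<le> t^3 / 2" "\<bar>W j\<bar> \<le> t^3 / 2"
    using abs_le_L2_set[OF A(1), of _ W] A V unfolding W_def by (meson order_trans)+
  then have "\<bar>\<sigma> * (W i - W j)\<bar> \<le> (\<sigma>0 + \<bar>a\<bar>) * t^3"
    unfolding abs_mult a_def using \<sigma>0 by (intro mult_mono) auto
  moreover have "\<bar>a\<bar> * (6 * t * R) \<le> \<bar>a * (U i - U j)\<bar>"
    using U by (simp add: abs_mult mult_left_mono)
  moreover have "z i - z j = a * (U i - U j) - \<sigma> * (W i - W j)"
    using r by (simp add: z_def W_def a_def algebra_simps)
  ultimately have "\<bar>a\<bar> * (6 * t * R - t^3) - \<sigma>0 * t^3 \<le> \<bar>z i - z j\<bar>"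
    by (simp add: algebra_simps)
  moreover have "5 * t * L / 4 \<le> \<bar>a\<bar> * (6 * t * R - t^3)"
  proof -
    have "t^3 \<le> t"
      using t power_decreasing[of 1 3 t] by simp
    also have "t \<le> t * R"
      using t U mult_left_mono[of 1 R t] by simp
    finally have "t^3 \<le> t * R" .
    have "5 * t * L / 4 = L / (4 * R) * (5 * t * R)"
      using U by (simp add: field_simps)
    also have "\<dots> \<le> \<bar>a\<bar> * (6 * t * R - t^3)"
      using shift \<open>t^3 \<le> t * R\<close> t U unfolding a_def by (intro mult_mono) (auto simp: mult.commute)
    finally show ?thesis .
  qed
  moreover have "\<sigma>0 * t^3 \<le> t * L / 4"
  proof -
    have "\<sigma>0 * t^3 = t * (\<sigma>0 * t\<^sup>2)"
      by (simp add: power3_eq_cube power2_eq_square)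
    also have "\<dots> \<le> t * (L / 4)"
      using \<sigma>0 t by (intro mult_left_mono) auto
    finally show ?thesis
      by simp
  qed
  ultimately have "t * L \<le> \<bar>z i - z j\<bar>"
    by linarith
  moreover have "0 \<le> t * L"
  proof -
    have "0 \<le> 4 * \<sigma>0 * t\<^sup>2"
      using \<sigma>0 by simp
    then have "0 \<le> L"
      using \<sigma>0 by linarith
    then show ?thesis
      using t by simp
  qed
  ultimately have "(t * L)\<^sup>2 \<le> \<bar>z i - z j\<bar>\<^sup>2"
    by (intro power_mono)
  also have "\<dots> = (z i - z j)\<^sup>2"
    by simp
  also have "\<dots> \<le> 2 * (L2_set z A)\<^sup>2"
    using diff_square_le_L2_set[OF A] .
  finally have "(t * L)\<^sup>2 \<le> 2 * (L2_set z A)\<^sup>2" .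
  moreover have "(t * L / 2)\<^sup>2 = (t * L)\<^sup>2 / 4"
    by (simp add: power_divide)
  ultimately have "(t * L / 2)\<^sup>2 \<le> (L2_set z A)\<^sup>2"
    using zero_le_power2[of "L2_set z A"] by linarith
  then show ?thesis
    unfolding z_def by (rule power2_le_imp_le) simp
qed

lemma residual_lower_bound:
  fixes r U V :: "nat \<Rightarrow> real"
  assumes A: "finite A" "i \<in> A" "j \<in> A" "i \<noteq> j"
    and r: "r i = r j" "L \<le> L2_set r A" and L: "0 < L"
    and U: "L2_set U A \<le> R" "1 \<le> R" "6 * t * R \<le> \<bar>U i - U j\<bar>"
    and V: "L2_set (\<lambda>l. V l - U l) A \<le> t^3 / 2"
    and t: "0 < t" "t \<le> 1" and \<sigma>0: "0 \<le> \<sigma>0" "4 * \<sigma>0 * t\<^sup>2 \<le> L"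
  shows "t * L / 2 \<le> L2_set (\<lambda>l. r l + \<sigma>0 * U l - \<sigma> * V l) A"
proof (cases "\<bar>\<sigma>0 - \<sigma>\<bar> \<le> L / (4 * R)")
  case True
  then have "L / 2 \<le> L2_set (\<lambda>l. r l + \<sigma>0 * U l - \<sigma> * V l) A"
    using t by (intro residual_lower_bound_small_shift[OF r(2) L U(1,2) True V _ t(2) \<sigma>0]) simp
  moreover have "t * L \<le> 1 * L"
    using t L by (intro mult_right_mono) auto
  ultimately show ?thesis
    by linarith
next
  case False
  then show ?thesis
    by (intro residual_lower_bound_large_shift[OF A r(1) U(3,2) _ V t \<sigma>0]) simp
qed

section \<open>The selection criterion\<close>

lemma obj_le:
  "obj n0 g lam Y Us k \<le> sqnorm n0 (\<lambda>i. Y i - Xmul g k \<beta> i - \<sigma> * Us i) + lam * real k"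
proof -
  have "(INF p. sqnorm n0 (\<lambda>i. Y i - Xmul g k (fst p) i - snd p * Us i))
      \<le> sqnorm n0 (\<lambda>i. Y i - Xmul g k (fst (\<beta>, \<sigma>)) i - snd (\<beta>, \<sigma>) * Us i)"
    by (intro cINF_lower bdd_belowI2[of _ 0]) (auto simp: sqnorm_nonneg)
  then show ?thesis
    by (simp add: obj_def)
qed

lemma obj_ge:
  assumes "\<And>\<beta> \<sigma>. c \<le> sqnorm n0 (\<lambda>i. Y i - Xmul g k \<beta> i - \<sigma> * Us i)"
  shows "c + lam * real k \<le> obj n0 g lam Y Us k"
proof -
  have "c \<le> (INF p. sqnorm n0 (\<lambda>i. Y i - Xmul g k (fst p) i - snd p * Us i))"
    using assms by (intro cINF_greatest) auto
  then show ?thesis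
    by (simp add: obj_def)
qed

lemma khat_eqI:
  assumes "k0 \<le> n" "\<And>k. k \<le> n \<Longrightarrow> k \<noteq> k0 \<Longrightarrow> obj n0 g lam Y Us k0 < obj n0 g lam Y Us k"
  shows "khat n0 n g lam Y Us = k0"
  unfolding khat_def
proof (rule Least_equality)
  show "k0 \<le> n \<and> (\<forall>k'\<le>n. obj n0 g lam Y Us k0 \<le> obj n0 g lam Y Us k')"
    using assms by (metis order.order_iff_strict)
next
  fix k assume "k \<le> n \<and> (\<forall>k'\<le>n. obj n0 g lam Y Us k \<le> obj n0 g lam Y Us k')"
  then show "k0 \<le> k"
    using assms by (metis linorder_not_le order.asym)
qed

text \<open>The squared distance \<open>D\<^sub>k\<close> from the mean \<open>X\<^sub>k\<^sub>0 \<beta>0\<close> to the column space of \<open>X\<^sub>k\<close>,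
  the numerator in \<^const>\<open>Cmin\<close>.\<close>

definition model_misfit ::
  "nat \<Rightarrow> (nat \<Rightarrow> nat \<Rightarrow> nat) \<Rightarrow> nat \<Rightarrow> (nat \<Rightarrow> real) \<Rightarrow> nat \<Rightarrow> real" where
  "model_misfit n0 g k0 \<beta>0 k = (INF \<beta>. sqnorm n0 (\<lambda>i. Xmul g k0 \<beta>0 i - Xmul g k \<beta> i))"

lemma model_misfit_le: "model_misfit n0 g k0 \<beta>0 k \<le> sqnorm n0 (\<lambda>i. Xmul g k0 \<beta>0 i - Xmul g k \<beta> i)"
  unfolding model_misfit_def by (intro cINF_lower bdd_belowI2[of _ 0]) (auto simp: sqnorm_nonneg)

lemma lam_le_model_misfit:
  assumes "k < k0" "1 \<le> n0" "lam \<le> n0 * t\<^sup>2 * Cmin n0 g k0 \<beta>0 / 6"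
  shows "lam * real (k0 - k) \<le> t\<^sup>2 * model_misfit n0 g k0 \<beta>0 k / 6"
proof -
  let ?D = "model_misfit n0 g k0 \<beta>0 k"
  have "Cmin n0 g k0 \<beta>0 \<le> ?D / (n0 * real (k0 - k))"
    unfolding Cmin_def model_misfit_def using assms(1) by (intro Min_le) auto
  then have "n0 * t\<^sup>2 * Cmin n0 g k0 \<beta>0 \<le> n0 * t\<^sup>2 * (?D / (n0 * real (k0 - k)))"
    by (intro mult_left_mono) auto
  also have "\<dots> = t\<^sup>2 * ?D / real (k0 - k)"
    using assms(2) by (simp add: field_simps)
  finally have "n0 * t\<^sup>2 * Cmin n0 g k0 \<beta>0 / 6 \<le> t\<^sup>2 * ?D / real (k0 - k) / 6"
    by (rule divide_right_mono) simp
  then have "lam \<le> t\<^sup>2 * ?D / real (k0 - k) / 6"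
    by (rule order_trans[OF assms(3)])
  then show ?thesis
    using assms(1) by (simp add: field_simps)
qed

context
  fixes n0 k0 :: nat and g :: "nat \<Rightarrow> nat \<Rightarrow> nat" and \<beta>0 U V :: "nat \<Rightarrow> real"
    and \<sigma>0 lam t :: real
  assumes n0: "1 \<le> n0" and \<sigma>0: "0 < \<sigma>0" and t: "0 < t" "t \<le> 1"
    and lam_lower: "3 * t^6 * \<sigma>0\<^sup>2 \<le> lam"
    and close: "\<And>i. i < n0 \<Longrightarrow> \<bar>V i - U i\<bar> \<le> t^3 / (2 * real n0)"
begin

lemma lam_pos: "0 < lam"
proof -
  have "0 < 3 * t^6 * \<sigma>0\<^sup>2"
    using \<sigma>0 t by simp
  then show ?thesis
    using lam_lower by linarith
qed

lemma L2_set_close: "L2_set (\<lambda>l. V l - U l) {..<n0} \<le> t^3 / 2"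
  using L2_set_le_card_mult[of "{..<n0}" "\<lambda>l. V l - U l" "t^3 / (2 * real n0)"] close n0 by simp

lemma obj_true_model_le:
  "obj n0 g lam (\<lambda>i. Xmul g k0 \<beta>0 i + \<sigma>0 * U i) V k0 \<le> lam / 12 + lam * k0"
proof -
  have "(\<lambda>i. Xmul g k0 \<beta>0 i + \<sigma>0 * U i - Xmul g k0 \<beta>0 i - \<sigma>0 * V i)
      = (\<lambda>l. (- \<sigma>0) * (V l - U l))"
    by (auto simp: algebra_simps)
  then have "sqnorm n0 (\<lambda>i. Xmul g k0 \<beta>0 i + \<sigma>0 * U i - Xmul g k0 \<beta>0 i - \<sigma>0 * V i)
      = \<sigma>0\<^sup>2 * (L2_set (\<lambda>l. V l - U l) {..<n0})\<^sup>2"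
    by (simp only: sqnorm_eq_L2_set L2_set_cmult) (simp add: power_mult_distrib)
  also have "\<dots> \<le> \<sigma>0\<^sup>2 * (t^3 / 2)\<^sup>2"
    using L2_set_close by (intro mult_left_mono power_mono) auto
  also have "\<dots> \<le> lam / 12"
    using lam_lower by (simp add: power_divide mult_ac flip: power_mult)
  finally show ?thesis
    using obj_le[of n0 g lam "\<lambda>i. Xmul g k0 \<beta>0 i + \<sigma>0 * U i" V k0 \<beta>0 \<sigma>0] by linarith
qed

lemma obj_true_model_less_larger:
  assumes "k0 < k"
  shows "obj n0 g lam (\<lambda>i. Xmul g k0 \<beta>0 i + \<sigma>0 * U i) V k0
       < obj n0 g lam (\<lambda>i. Xmul g k0 \<beta>0 i + \<sigma>0 * U i) V k"
proof -
  have "lam * k0 + lam \<le> lam * k"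
    using assms lam_pos mult_left_mono[of "real k0 + 1" "real k" lam] by (simp add: algebra_simps)
  moreover have "0 + lam * k \<le> obj n0 g lam (\<lambda>i. Xmul g k0 \<beta>0 i + \<sigma>0 * U i) V k"
    by (rule obj_ge) (rule sqnorm_nonneg)
  ultimately show ?thesis
    using obj_true_model_le lam_pos by linarith
qed

lemma model_misfit_lower:
  assumes "k < k0" "lam \<le> n0 * t\<^sup>2 * Cmin n0 g k0 \<beta>0 / 6"
  shows "(4 * \<sigma>0 * t\<^sup>2)\<^sup>2 \<le> model_misfit n0 g k0 \<beta>0 k"
proof -
  let ?D = "model_misfit n0 g k0 \<beta>0 k"
  have "lam \<le> lam * real (k0 - k)"
    using lam_pos assms(1) by simp
  have "t\<^sup>2 * (18 * (t^4 * \<sigma>0\<^sup>2)) = 6 * (3 * t^6 * \<sigma>0\<^sup>2)"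
    by (simp flip: power_add)
  also have "\<dots> \<le> t\<^sup>2 * ?D"
    using lam_le_model_misfit[OF assms(1) n0 assms(2)] lam_lower \<open>lam \<le> lam * real (k0 - k)\<close>
    by linarith
  finally have "t\<^sup>2 * (18 * (t^4 * \<sigma>0\<^sup>2)) \<le> t\<^sup>2 * ?D" .
  then have "18 * (t^4 * \<sigma>0\<^sup>2) \<le> ?D"
    using t by simp
  moreover have "(4 * \<sigma>0 * t\<^sup>2)\<^sup>2 = 16 * (t^4 * \<sigma>0\<^sup>2)"
    by (simp add: power_mult_distrib flip: power_mult)
  moreover have "0 \<le> t^4 * \<sigma>0\<^sup>2"
    by simp
  ultimately show ?thesis
    by linarith
qed

lemma model_misfit_pos:
  assumes "k < k0" "lam \<le> n0 * t\<^sup>2 * Cmin n0 g k0 \<beta>0 / 6"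
  shows "0 < model_misfit n0 g k0 \<beta>0 k"
proof -
  have "0 < (4 * \<sigma>0 * t\<^sup>2)\<^sup>2"
    using \<sigma>0 t by simp
  with model_misfit_lower[OF assms] show ?thesis
    by linarith
qed

lemma sqnorm_residual_lower:
  fixes M :: real
  assumes k: "k < k0"
    and pair: "i0 < n0" "j0 < n0" "i0 \<noteq> j0" "g k i0 = g k j0" "g k0 i0 = g k0 j0"
    and U: "\<And>i. i < n0 \<Longrightarrow> \<bar>U i\<bar> \<le> M" "1 \<le> M" "6 * t * (n0 * M) \<le> \<bar>U i0 - U j0\<bar>"
    and lam_upper: "lam \<le> n0 * t\<^sup>2 * Cmin n0 g k0 \<beta>0 / 6"
  shows "t\<^sup>2 * model_misfit n0 g k0 \<beta>0 k / 4
    \<le> sqnorm n0 (\<lambda>i. Xmul g k0 \<beta>0 i + \<sigma>0 * U i - Xmul g k \<beta> i - \<sigma> * V i)"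
proof -
  define L where "L = sqrt (model_misfit n0 g k0 \<beta>0 k)"
  define r where "r = (\<lambda>i. Xmul g k0 \<beta>0 i - Xmul g k \<beta> i)"
  have L: "0 < L" "L\<^sup>2 = model_misfit n0 g k0 \<beta>0 k" "4 * \<sigma>0 * t\<^sup>2 \<le> L"
    using model_misfit_pos[OF k lam_upper] model_misfit_lower[OF k lam_upper]
    by (auto simp: L_def real_le_rsqrt)
  have "L \<le> L2_set r {..<n0}"
    using model_misfit_le[of n0 g k0 \<beta>0 k \<beta>] by (simp add: L_def r_def sqnorm_eq_L2_set real_le_lsqrt)
  moreover have "r i0 = r j0"
    using pair by (simp add: r_def Xmul_def)
  moreover have "L2_set U {..<n0} \<le> n0 * M"
    using L2_set_le_card_mult[of "{..<n0}" U M] U by simp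
  moreover have "1 * 1 \<le> n0 * M"
    using n0 U by (intro mult_mono) auto
  ultimately have "t * L / 2 \<le> L2_set (\<lambda>i. r i + \<sigma>0 * U i - \<sigma> * V i) {..<n0}"
    using pair U t \<sigma>0 L L2_set_close by (intro residual_lower_bound[where R = "n0 * M"]) (auto simp: mult_ac)
  then have "(t * L / 2)\<^sup>2 \<le> (L2_set (\<lambda>i. r i + \<sigma>0 * U i - \<sigma> * V i) {..<n0})\<^sup>2"
    using t L by (intro power_mono) auto
  then show ?thesis
    using L by (simp add: r_def sqnorm_eq_L2_set power_mult_distrib power_divide algebra_simps)
qed

lemma obj_true_model_less_smaller:
  fixes M :: real
  assumes k: "k < k0"
    and pair: "i0 < n0" "j0 < n0" "i0 \<noteq> j0" "g k i0 = g k j0" "g k0 i0 = g k0 j0"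
    and U: "\<And>i. i < n0 \<Longrightarrow> \<bar>U i\<bar> \<le> M" "1 \<le> M" "6 * t * (n0 * M) \<le> \<bar>U i0 - U j0\<bar>"
    and lam_upper: "lam \<le> n0 * t\<^sup>2 * Cmin n0 g k0 \<beta>0 / 6"
  shows "obj n0 g lam (\<lambda>i. Xmul g k0 \<beta>0 i + \<sigma>0 * U i) V k0
       < obj n0 g lam (\<lambda>i. Xmul g k0 \<beta>0 i + \<sigma>0 * U i) V k"
proof -
  let ?D = "model_misfit n0 g k0 \<beta>0 k"
  have "t\<^sup>2 * ?D / 4 + lam * k \<le> obj n0 g lam (\<lambda>i. Xmul g k0 \<beta>0 i + \<sigma>0 * U i) V k"
    using assms by (intro obj_ge sqnorm_residual_lower)
  moreover have "lam * k0 = lam * k + lam * real (k0 - k)"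
    using k by (simp add: of_nat_diff algebra_simps)
  moreover have "lam * real (k0 - k) \<le> t\<^sup>2 * ?D / 6"
    using k n0 lam_upper by (rule lam_le_model_misfit)
  moreover have "lam \<le> lam * real (k0 - k)"
    using lam_pos k by simp
  moreover have "0 < t\<^sup>2 * ?D"
    using model_misfit_pos[OF k lam_upper] t by simp
  ultimately show ?thesis
    using obj_true_model_le by linarith
qed

lemma khat_true_model:
  fixes M :: real
  assumes "k0 \<le> n"
    and pair: "i0 < n0" "j0 < n0" "i0 \<noteq> j0" "\<And>k. k \<le> k0 \<Longrightarrow> g k i0 = g k j0"
    and U: "\<And>i. i < n0 \<Longrightarrow> \<bar>U i\<bar> \<le> M" "1 \<le> M" "6 * t * (n0 * M) \<le> \<bar>U i0 - U j0\<bar>"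
    and lam_upper: "k0 = 0 \<or> lam \<le> n0 * t\<^sup>2 * Cmin n0 g k0 \<beta>0 / 6"
  shows "khat n0 n g lam (\<lambda>i. Xmul g k0 \<beta>0 i + \<sigma>0 * U i) V = k0"
proof (rule khat_eqI)
  fix k assume "k \<le> n" "k \<noteq> k0"
  then consider "k0 < k" | "k < k0"
    by linarith
  then show "obj n0 g lam (\<lambda>i. Xmul g k0 \<beta>0 i + \<sigma>0 * U i) V k0
           < obj n0 g lam (\<lambda>i. Xmul g k0 \<beta>0 i + \<sigma>0 * U i) V k"
  proof cases
    case 1
    then show ?thesis
      by (rule obj_true_model_less_larger)
  next
    case 2
    then show ?thesis
      using pair U lam_upper by (intro obj_true_model_less_smaller) auto
  qed
qed (fact assms(1))

end

section \<open>Nested designs\<close>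

lemma nested_designs_coarser:
  assumes nested: "nested_designs n0 n d g" and "k \<le> k'" "k' \<le> n"
    and "i < n0" "j < n0" "g k' i = g k' j"
  shows "g k i = g k j"
  using \<open>k \<le> k'\<close>
proof (induction rule: inc_induct)
  case base
  show ?case
    by (fact assms(6))
next
  case (step m)
  have "\<forall>k<n. \<forall>i<n0. \<forall>j<n0. g (Suc k) i = g (Suc k) j \<longrightarrow> g k i = g k j"
    using nested unfolding nested_designs_def by (rule conjunct2)
  moreover have "m < n"
    using step assms(3) by linarith
  ultimately show ?case
    using step assms(4,5) by blast
qed

lemma nested_designs_collision:
  assumes nested: "nested_designs n0 n d g" and "k0 \<le> n" "d k0 < n0"
  obtains i j where "i < n0" "j < n0" "i \<noteq> j" "\<And>k. k \<le> k0 \<Longrightarrow> g k i = g k j"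
proof -
  have "\<not> inj_on (g k0) {..<n0}"
  proof
    assume "inj_on (g k0) {..<n0}"
    then have "card (g k0 ` {..<n0}) = n0"
      by (simp add: card_image)
    then show False
      using nested assms(2,3) unfolding nested_designs_def by simp
  qed
  then obtain i j where ij: "i < n0" "j < n0" "i \<noteq> j" "g k0 i = g k0 j"
    unfolding inj_on_def by blast
  show ?thesis
    by (rule that[OF ij(1-3)]) (rule nested_designs_coarser[OF nested _ assms(2) ij(1,2,4)])
qed

section \<open>Measurability\<close>

text \<open>\<^const>\<open>obj\<close> is an infimum over uncountably many parameters; restricted to this countable grid
  it becomes a countable infimum of measurable functions.\<close>

definition grid_params :: "nat \<Rightarrow> ((nat \<Rightarrow> real) \<times> real) set" where
  "grid_params N = (\<lambda>(l :: int list, z :: int, c :: nat).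
     ((\<lambda>j. if j < N then of_int (l ! j) / real (Suc c) else 0), of_int z / real (Suc c))) ` UNIV"

definition grid_round :: "nat \<Rightarrow> real \<Rightarrow> real" where
  "grid_round c y = of_int \<lfloor>y * real (Suc c)\<rfloor> / real (Suc c)"

lemma countable_grid_params: "countable (grid_params N)"
  unfolding grid_params_def by (intro countable_image countableI_type)

lemma grid_round_in_grid_params:
  "((\<lambda>j. if j < N then grid_round c (\<beta> j) else 0), grid_round c \<sigma>) \<in> grid_params N"
  unfolding grid_params_def grid_round_def
  by (rule image_eqI[where x = "(map (\<lambda>j. \<lfloor>\<beta> j * real (Suc c)\<rfloor>) [0..<N], \<lfloor>\<sigma> * real (Suc c)\<rfloor>, c)"])
    (auto simp: fun_eq_iff)

lemma grid_round_tendsto: "(\<lambda>c. grid_round c y) \<longlonglongrightarrow> y"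
proof (rule tendsto_sandwich[where f = "\<lambda>c. y - inverse (real (Suc c))" and h = "\<lambda>c. y"])
  show "\<forall>\<^sub>F c in sequentially. y - inverse (real (Suc c)) \<le> grid_round c y"
  proof (intro always_eventually allI)
    fix c
    have "(y * real (Suc c) - 1) / real (Suc c) \<le> grid_round c y"
      unfolding grid_round_def by (intro divide_right_mono) linarith+
    then show "y - inverse (real (Suc c)) \<le> grid_round c y"
      by (simp add: diff_divide_distrib inverse_eq_divide)
  qed
  show "\<forall>\<^sub>F c in sequentially. grid_round c y \<le> y"
  proof (intro always_eventually allI)
    fix c
    have "of_int \<lfloor>y * real (Suc c)\<rfloor> \<le> y * real (Suc c)"
      by linarith
    then show "grid_round c y \<le> y"
      unfolding grid_round_def by (simp add: divide_le_eq)
  qed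
  show "(\<lambda>c. y - inverse (real (Suc c))) \<longlonglongrightarrow> y"
    using LIMSEQ_inverse_real_of_nat_add_minus[of y] by simp
qed simp

lemma INF_grid_params:
  assumes "\<And>i. i < n0 \<Longrightarrow> g k i < N"
  shows "(INF p. sqnorm n0 (\<lambda>i. Y i - Xmul g k (fst p) i - snd p * Us i))
       = (INF p\<in>grid_params N. sqnorm n0 (\<lambda>i. Y i - Xmul g k (fst p) i - snd p * Us i))"
    (is "(INF p. ?F p) = (INF p\<in>grid_params N. ?F p)")
proof (rule antisym)
  have bdd: "bdd_below (?F ` A)" for A
    by (intro bdd_belowI2[of _ 0]) (simp add: sqnorm_nonneg)
  have "grid_params N \<noteq> {}"
    using grid_round_in_grid_params by blast
  then show "(INF p. ?F p) \<le> (INF p\<in>grid_params N. ?F p)"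
    by (intro cINF_superset_mono bdd) auto
  show "(INF p\<in>grid_params N. ?F p) \<le> (INF p. ?F p)"
  proof (rule cINF_greatest)
    fix p :: "(nat \<Rightarrow> real) \<times> real"
    obtain \<beta> \<sigma> where p: "p = (\<beta>, \<sigma>)"
      by fastforce
    define q where "q c = ((\<lambda>j. if j < N then grid_round c (\<beta> j) else 0), grid_round c \<sigma>)" for c
    have "?F (q c) = (\<Sum>i<n0. (Y i - grid_round c (\<beta> (g k i)) - grid_round c \<sigma> * Us i)\<^sup>2)" for c
      using assms by (simp add: q_def sqnorm_def Xmul_def)
    then have "(\<lambda>c. ?F (q c)) \<longlonglongrightarrow> ?F p"
      by (simp add: p sqnorm_def Xmul_def) (intro tendsto_intros grid_round_tendsto)
    moreover have "(INF p\<in>grid_params N. ?F p) \<le> ?F (q c)" for c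
      by (intro cINF_lower bdd) (simp add: q_def grid_round_in_grid_params)
    ultimately show "(INF p\<in>grid_params N. ?F p) \<le> ?F p"
      by (intro LIMSEQ_le_const) auto
  qed simp
qed

lemma gauss_space_component_measurable [measurable]:
  "(\<lambda>\<omega>. \<omega> x) \<in> borel_measurable (gauss_space n0 B)"
  unfolding gauss_space_def by (rule std_normal.component_borel_measurable)

lemma obj_measurable:
  assumes "b \<le> B"
  shows "(\<lambda>\<omega>. obj n0 g lam (Yobs n0 g k0 \<beta>0 \<sigma>0 \<omega>) (\<lambda>i. \<omega> (b, i)) k) \<in> borel_measurable (gauss_space n0 B)"
proof -
  obtain N where N: "\<And>i. i < n0 \<Longrightarrow> g k i < N"
    using finite_nat_bounded[of "g k ` {..<n0}"] by auto
  have "(\<lambda>\<omega>. sqnorm n0 (\<lambda>i. Yobs n0 g k0 \<beta>0 \<sigma>0 \<omega> i - Xmul g k (fst p) i - snd p * \<omega> (b, i)))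
      \<in> borel_measurable (gauss_space n0 B)" for p
    unfolding sqnorm_def Yobs_def by measurable
  moreover have "obj n0 g lam (Yobs n0 g k0 \<beta>0 \<sigma>0 \<omega>) (\<lambda>i. \<omega> (b, i)) k =
      (INF p\<in>grid_params N. sqnorm n0 (\<lambda>i. Yobs n0 g k0 \<beta>0 \<sigma>0 \<omega> i - Xmul g k (fst p) i - snd p * \<omega> (b, i)))
      + lam * k" for \<omega>
    unfolding obj_def by (subst INF_grid_params[of n0 g k N]) (use N in auto)
  ultimately show ?thesis
    by (simp only:) (intro borel_measurable_add borel_measurable_const borel_measurable_cINF_real
        countable_grid_params)
qed

lemma khat_measurable:
  assumes "b \<le> B"
  shows "(\<lambda>\<omega>. khat n0 n g lam (Yobs n0 g k0 \<beta>0 \<sigma>0 \<omega>) (\<lambda>i. \<omega> (b, i)))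
    \<in> measurable (gauss_space n0 B) (count_space UNIV)"
proof -
  have le: "Measurable.pred (gauss_space n0 B) (\<lambda>\<omega>.
      obj n0 g lam (Yobs n0 g k0 \<beta>0 \<sigma>0 \<omega>) (\<lambda>i. \<omega> (b, i)) k
      \<le> obj n0 g lam (Yobs n0 g k0 \<beta>0 \<sigma>0 \<omega>) (\<lambda>i. \<omega> (b, i)) k')" for k k'
    unfolding pred_def by (rule borel_measurable_le) (rule obj_measurable[OF assms])+
  have const: "Measurable.pred (gauss_space n0 B) (\<lambda>\<omega>. P)" for P
    by (cases P) (simp_all add: pred_def)
  show ?thesis
    unfolding khat_def by (intro measurable_Least pred_intros_logic pred_intros_countable const le)
qed

lemma sets_miss_event: "miss_event n0 n g k0 \<beta>0 \<sigma>0 lam B \<in> sets (gauss_space n0 B)"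
proof -
  have "miss_event n0 n g k0 \<beta>0 \<sigma>0 lam B = {\<omega> \<in> space (gauss_space n0 B).
      \<forall>b\<in>{1..B}. khat n0 n g lam (Yobs n0 g k0 \<beta>0 \<sigma>0 \<omega>) (\<lambda>i. \<omega> (b, i)) \<noteq> k0}"
    unfolding miss_event_def by (auto simp: image_iff)
  also have "\<dots> \<in> sets (gauss_space n0 B)"
  proof (intro sets.sets_Collect_finite_All)
    fix b assume "b \<in> {1..B}"
    then have "(\<lambda>\<omega>. khat n0 n g lam (Yobs n0 g k0 \<beta>0 \<sigma>0 \<omega>) (\<lambda>i. \<omega> (b, i)))
        \<in> measurable (gauss_space n0 B) (count_space UNIV)"
      by (intro khat_measurable) simp
    from measurable_sets[OF this, of "- {k0}"]
    show "{\<omega> \<in> space (gauss_space n0 B).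
        khat n0 n g lam (Yobs n0 g k0 \<beta>0 \<sigma>0 \<omega>) (\<lambda>i. \<omega> (b, i)) \<noteq> k0} \<in> sets (gauss_space n0 B)"
      by (simp add: vimage_def Int_def conj_commute)
  qed simp
  finally show ?thesis .
qed

section \<open>The probability of missing \<open>k0\<close>\<close>

lemma miss_event_subset:
  fixes M t :: real
  assumes "k0 \<le> n" "1 \<le> n0" "0 < \<sigma>0" "0 < t" "t \<le> 1" "1 \<le> M"
    and lam_lower: "3 * t^6 * \<sigma>0\<^sup>2 \<le> lam"
    and lam_upper: "k0 = 0 \<or> lam \<le> n0 * t\<^sup>2 * Cmin n0 g k0 \<beta>0 / 6"
    and pair: "i0 < n0" "j0 < n0" "i0 \<noteq> j0" "\<And>k. k \<le> k0 \<Longrightarrow> g k i0 = g k j0"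
  shows "miss_event n0 n g k0 \<beta>0 \<sigma>0 lam B \<subseteq>
      {\<omega> \<in> space (gauss_space n0 B). \<exists>x\<in>{0} \<times> {..<n0}. M < \<bar>\<omega> x\<bar>}
    \<union> {\<omega> \<in> space (gauss_space n0 B). \<bar>\<omega> (0, i0) - \<omega> (0, j0)\<bar> < 6 * t * (n0 * M)}
    \<union> far_candidates n0 B M (t^3 / (2 * real n0))" (is "_ \<subseteq> ?events")
proof
  fix \<omega> assume miss: "\<omega> \<in> miss_event n0 n g k0 \<beta>0 \<sigma>0 lam B"
  then have \<omega>: "\<omega> \<in> {..B} \<times> {..<n0} \<rightarrow>\<^sub>E UNIV"
    by (simp add: miss_event_def gauss_space_def space_PiM)
  show "\<omega> \<in> ?events"
  proof (cases "(\<forall>i<n0. \<bar>\<omega> (0, i)\<bar> \<le> M) \<and> 6 * t * (n0 * M) \<le> \<bar>\<omega> (0, i0) - \<omega> (0, j0)\<bar>")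
    case False
    then show ?thesis
      using miss by (auto simp: miss_event_def not_le)
  next
    case True
    have "\<exists>i<n0. t^3 / (2 * real n0) < \<bar>\<omega> (b, i) - \<omega> (0, i)\<bar>" if b: "b \<in> {1..B}" for b
    proof (rule ccontr)
      assume "\<not> ?thesis"
      then have close: "\<bar>\<omega> (b, i) - \<omega> (0, i)\<bar> \<le> t^3 / (2 * real n0)" if "i < n0" for i
        using that not_less by blast
      have "khat n0 n g lam (\<lambda>i. Xmul g k0 \<beta>0 i + \<sigma>0 * \<omega> (0, i)) (\<lambda>i. \<omega> (b, i)) = k0"
        using True by (intro khat_true_model[OF assms(2-5) lam_lower close assms(1) pair _ assms(6) _ lam_upper])
          auto
      moreover have "Yobs n0 g k0 \<beta>0 \<sigma>0 \<omega> = (\<lambda>i. Xmul g k0 \<beta>0 i + \<sigma>0 * \<omega> (0, i))"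
        by (simp add: Yobs_def fun_eq_iff)
      ultimately show False
        using miss b unfolding miss_event_def by (metis (no_types, lifting) image_eqI mem_Collect_eq)
    qed
    then have "\<omega> \<in> far_candidates n0 B M (t^3 / (2 * real n0))"
      using \<omega> True by (simp add: far_candidates_def)
    then show ?thesis
      by simp
  qed
qed

lemma measure_miss_event_le:
  fixes M t :: real
  assumes nested: "nested_designs n0 n d g" and "k0 \<le> n" "d k0 < n0"
    and "0 < \<sigma>0" "0 < t" "t \<le> 1" "1 \<le> M"
    and lam_lower: "3 * t^6 * \<sigma>0\<^sup>2 \<le> lam"
    and lam_upper: "k0 = 0 \<or> lam \<le> n0 * t\<^sup>2 * Cmin n0 g k0 \<beta>0 / 6"
    and p: "p \<le> (t^3 * std_normal_density (M + 1) / n0)^n0"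
  shows "measure (gauss_space n0 B) (miss_event n0 n g k0 \<beta>0 \<sigma>0 lam B)
    \<le> n0 * measure std_normal_distribution {x. M < \<bar>x\<bar>} + 6 * t * (n0 * M)
      + (1 - p)^B"
proof -
  obtain i0 j0 where pair: "i0 < n0" "j0 < n0" "i0 \<noteq> j0" "\<And>k. k \<le> k0 \<Longrightarrow> g k i0 = g k j0"
    using nested_designs_collision[OF nested assms(2,3)] by blast
  have n0: "1 \<le> n0"
    using assms(3) by simp
  interpret P: prob_space "gauss_space n0 B"
    unfolding gauss_space_def by (rule std_normal.prob_space_PiM_iid)
  define h where "h = t^3 / (2 * real n0)"
  define tail where "tail = {\<omega> \<in> space (gauss_space n0 B). \<exists>x\<in>{0} \<times> {..<n0}. M < \<bar>\<omega> x\<bar>}"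
  define close where "close = {\<omega> \<in> space (gauss_space n0 B). \<bar>\<omega> (0, i0) - \<omega> (0, j0)\<bar> < 6 * t * (n0 * M)}"
  have tail_sets: "tail \<in> P.events"
    unfolding tail_def by measurable
  have close_sets: "close \<in> P.events"
    unfolding close_def by measurable
  have far_sets: "far_candidates n0 B M h \<in> P.events"
    unfolding gauss_space_def by (rule std_normal.sets_far_candidates)
  have "miss_event n0 n g k0 \<beta>0 \<sigma>0 lam B \<subseteq> tail \<union> close \<union> far_candidates n0 B M h"
    using miss_event_subset[OF assms(2) n0 assms(4-7) lam_lower lam_upper pair]
    unfolding tail_def close_def h_def .
  then have "measure (gauss_space n0 B) (miss_event n0 n g k0 \<beta>0 \<sigma>0 lam B)
      \<le> measure (gauss_space n0 B) (tail \<union> close \<union> far_candidates n0 B M h)"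
    using tail_sets close_sets far_sets by (intro P.finite_measure_mono) auto
  also have "\<dots> \<le> measure (gauss_space n0 B) tail + measure (gauss_space n0 B) close
      + measure (gauss_space n0 B) (far_candidates n0 B M h)"
    using measure_Un_le[of "tail \<union> close" "gauss_space n0 B" "far_candidates n0 B M h"]
      measure_Un_le[of tail "gauss_space n0 B" close] tail_sets close_sets far_sets
    by fastforce
  also have "\<dots> \<le> n0 * measure std_normal_distribution {x. M < \<bar>x\<bar>} + 6 * t * (n0 * M) + (1 - p)^B"
  proof (intro add_mono)
    show "measure (gauss_space n0 B) tail \<le> n0 * measure std_normal_distribution {x. M < \<bar>x\<bar>}"
      using std_normal.measure_coordinate_tail_le[of "{0} \<times> {..<n0}" "{..B} \<times> {..<n0}" M]
      by (simp add: tail_def gauss_space_def card_cartesian_product subset_eq)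
    have "0 < 6 * t * (n0 * M)"
      using assms(5,7) n0 by simp
    then have "emeasure (gauss_space n0 B) close \<le> 6 * t * (n0 * M)"
      unfolding close_def gauss_space_def using pair(1-3)
      by (intro std_normal.emeasure_coordinate_diff_le std_normal_interval_upper) auto
    then show "measure (gauss_space n0 B) close \<le> 6 * t * (n0 * M)"
      using \<open>0 < 6 * t * (n0 * M)\<close> by (simp add: P.emeasure_eq_measure)
    have h: "0 < h" "h \<le> 1"
      using assms(5,6) n0 power_le_one[of t 3] by (simp_all add: h_def field_simps)
    have "2 * h * std_normal_density (M + 1) = t^3 * std_normal_density (M + 1) / n0"
      using n0 by (simp add: h_def)
    then have "p \<le> (\<Prod>i<n0. measure std_normal_distribution {c i - h..c i + h})"
      if "\<And>i. i < n0 \<Longrightarrow> \<bar>c i\<bar> \<le> M" for c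
      using std_normal_box_lower[of n0 c M h, OF that h] p by simp
    then show "measure (gauss_space n0 B) (far_candidates n0 B M h) \<le> (1 - p)^B"
      unfolding gauss_space_def using assms(7) p by (intro std_normal.measure_far_candidates_le) auto
  qed
  finally show ?thesis .
qed

lemma power8_powr_quarter:
  assumes "0 < t"
  shows "(t^8) powr (1/4) = (t\<^sup>2 :: real)"
proof -
  have "(t^8) powr (1/4) = (t powr 8) powr (1/4)"
    using assms by simp
  also have "\<dots> = t powr 2"
    by (simp add: powr_powr)
  finally show ?thesis
    using assms by simp
qed

lemma sqrt_one_plus_le: "0 \<le> x \<Longrightarrow> sqrt (1 + 2/3 * x) \<le> 1 + x/3"
  by (rule real_le_lsqrt) (auto simp: power2_eq_square algebra_simps)

lemma lam_lower_of_window: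
  fixes t \<sigma>0 lam :: real
  assumes t: "0 < t" and lam: "t^8 * \<sigma>0\<^sup>2 / (sqrt (1 + 2/3 * (t^8) powr (1/4)) - 1) \<le> lam"
  shows "3 * t^6 * \<sigma>0\<^sup>2 \<le> lam"
proof -
  have den: "0 < sqrt (1 + 2/3 * t\<^sup>2) - 1" "sqrt (1 + 2/3 * t\<^sup>2) - 1 \<le> t\<^sup>2 / 3"
    using t sqrt_one_plus_le[of "t\<^sup>2"] by auto
  have "3 * t^6 * \<sigma>0\<^sup>2 = t^8 * \<sigma>0\<^sup>2 / (t\<^sup>2 / 3)"
    using t by (simp add: field_simps flip: power_add)
  also have "\<dots> \<le> t^8 * \<sigma>0\<^sup>2 / (sqrt (1 + 2/3 * t\<^sup>2) - 1)"
    using den by (intro divide_left_mono) auto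
  also have "\<dots> \<le> lam"
    using lam t by (simp add: power8_powr_quarter)
  finally show ?thesis .
qed

lemma gamma_power_le_cube_mass:
  fixes t c :: real
  assumes "0 < t" "t \<le> 1" "t \<le> c" "2 \<le> n"
  shows "(t^8)^(n - 1) / real (n - 1) \<le> (t^3 * c)^n"
proof -
  have "(t^8)^(n - 1) / real (n - 1) \<le> (t^8)^(n - 1) / 1"
    using assms by (intro divide_left_mono) auto
  also have "\<dots> = (t^8)^(n - 1)"
    by simp
  also have "\<dots> = t^(8 * (n - 1))"
    by (simp add: power_mult)
  also have "\<dots> \<le> t^(4 * n)"
    using assms by (intro power_decreasing) auto
  also have "\<dots> = (t^3 * t)^n"
    by (simp add: power_mult flip: power_Suc2)
  also have "\<dots> \<le> (t^3 * c)^n"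
    using assms by (intro power_mono mult_left_mono) auto
  finally show ?thesis .
qed

lemma small_error_parameters:
  fixes \<delta> :: real and n0 :: nat
  assumes "0 < \<delta>" "1 \<le> n0"
  obtains t M :: real where "0 < t" "t \<le> 1" "t \<le> std_normal_density (M + 1) / n0" "1 \<le> M"
    "n0 * measure std_normal_distribution {x. M < \<bar>x\<bar>} + 6 * t * (n0 * M) \<le> 3 * \<delta> / 4"
proof -
  obtain M where M: "1 \<le> M" "measure std_normal_distribution {x. M < \<bar>x\<bar>} \<le> \<delta> / (2 * n0)"
    using std_normal.tail_measure_small[of "\<delta> / (2 * n0)"] assms by auto
  define t where "t = min 1 (min (\<delta> / (24 * n0 * M)) (std_normal_density (M + 1) / n0))"
  have "0 < \<delta> / (24 * n0 * M)" "0 < std_normal_density (M + 1) / n0"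
    using assms M(1) by (simp_all add: std_normal_density_def)
  then have t: "0 < t" "t \<le> 1" "t \<le> \<delta> / (24 * n0 * M)" "t \<le> std_normal_density (M + 1) / n0"
    by (auto simp: t_def)
  have "n0 * measure std_normal_distribution {x. M < \<bar>x\<bar>} \<le> \<delta> / 2"
    using mult_left_mono[OF M(2), of "real n0"] assms(2) by simp
  moreover have "6 * t * (n0 * M) \<le> \<delta> / 4"
    using t(3) M(1) assms(2) by (simp add: le_divide_eq mult_ac)
  ultimately show ?thesis
    using that t M(1) by simp
qed

lemma measure_miss_event_le_gamma:
  fixes M t :: real
  assumes nested: "nested_designs n0 n d g" and "k0 \<le> n" "d k0 < n0" "2 \<le> n0" "0 < \<sigma>0"
    and t: "0 < t" "t \<le> 1" "t \<le> std_normal_density (M + 1) / n0" and "1 \<le> M"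
    and lo: "t^8 * \<sigma>0\<^sup>2 / (sqrt (1 + 2/3 * (t^8) powr (1/4)) - 1) \<le> lam"
    and hi: "k0 = 0 \<or> lam \<le> n0 * (t^8) powr (1/4) * Cmin n0 g k0 \<beta>0 / 6"
  shows "measure (gauss_space n0 B) (miss_event n0 n g k0 \<beta>0 \<sigma>0 lam B)
    \<le> n0 * measure std_normal_distribution {x. M < \<bar>x\<bar>} + 6 * t * (n0 * M)
      + (1 - (t^8)^(n0 - 1) / real (n0 - 1))^B"
proof (rule measure_miss_event_le[OF assms(1-3,5) t(1,2) assms(9)])
  show "3 * t^6 * \<sigma>0\<^sup>2 \<le> lam"
    using t(1) lo by (rule lam_lower_of_window)
  show "k0 = 0 \<or> lam \<le> n0 * t\<^sup>2 * Cmin n0 g k0 \<beta>0 / 6"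
    using hi t(1) by (simp add: power8_powr_quarter)
  show "(t^8)^(n0 - 1) / real (n0 - 1) \<le> (t^3 * std_normal_density (M + 1) / n0)^n0"
    using gamma_power_le_cube_mass[OF t assms(4)] by simp
qed

theorem lemma3:
  fixes n0 n k0 :: nat and d :: "nat \<Rightarrow> nat" and g :: "nat \<Rightarrow> nat \<Rightarrow> nat"
  assumes "n0 \<ge> 1"
    and "nested_designs n0 n d g"
    and "k0 \<le> n"
    and "int n0 - int (d k0) > 4"
  shows "\<forall>\<delta>>0. \<exists>\<gamma>>0. \<forall>(\<beta>0 :: nat \<Rightarrow> real) (\<sigma>0 :: real) (lam :: real) (B :: nat).
           \<sigma>0 > 0 \<longrightarrow> minimal_k0 n0 g k0 \<beta>0 \<longrightarrow>
           \<gamma> * \<sigma>0^2 / (sqrt (1 + 2/3 * \<gamma> powr (1/4)) - 1) \<le> lam \<longrightarrow>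
           (k0 = 0 \<or> lam \<le> real n0 * \<gamma> powr (1/4) * Cmin n0 g k0 \<beta>0 / 6) \<longrightarrow>
           miss_event n0 n g k0 \<beta>0 \<sigma>0 lam B \<in> sets (gauss_space n0 B) \<and>
           measure (gauss_space n0 B) (miss_event n0 n g k0 \<beta>0 \<sigma>0 lam B)
             \<le> (1 - \<gamma>^(n0 - 1) / real (n0 - 1))^B + \<delta>"
proof (intro allI impI)
  fix \<delta> :: real
  assume "0 < \<delta>"
  have n0: "2 \<le> n0" "d k0 < n0"
    using assms(4) by linarith+
  obtain t M :: real where tM: "0 < t" "t \<le> 1" "t \<le> std_normal_density (M + 1) / n0" "1 \<le> M"
    and error: "n0 * measure std_normal_distribution {x. M < \<bar>x\<bar>} + 6 * t * (n0 * M) \<le> 3 * \<delta> / 4"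
    using small_error_parameters[OF \<open>0 < \<delta>\<close>, of n0] n0 by auto
  show "\<exists>\<gamma>>0. \<forall>\<beta>0 \<sigma>0 lam B. \<sigma>0 > 0 \<longrightarrow> minimal_k0 n0 g k0 \<beta>0 \<longrightarrow>
           \<gamma> * \<sigma>0^2 / (sqrt (1 + 2/3 * \<gamma> powr (1/4)) - 1) \<le> lam \<longrightarrow>
           (k0 = 0 \<or> lam \<le> real n0 * \<gamma> powr (1/4) * Cmin n0 g k0 \<beta>0 / 6) \<longrightarrow>
           miss_event n0 n g k0 \<beta>0 \<sigma>0 lam B \<in> sets (gauss_space n0 B) \<and>
           measure (gauss_space n0 B) (miss_event n0 n g k0 \<beta>0 \<sigma>0 lam B)
             \<le> (1 - \<gamma>^(n0 - 1) / real (n0 - 1))^B + \<delta>"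
  proof (intro exI[of _ "t^8"] conjI allI impI)
    fix \<beta>0 :: "nat \<Rightarrow> real" and \<sigma>0 lam :: real and B :: nat
    assume "0 < \<sigma>0" and lo: "t^8 * \<sigma>0\<^sup>2 / (sqrt (1 + 2/3 * (t^8) powr (1/4)) - 1) \<le> lam"
      and hi: "k0 = 0 \<or> lam \<le> n0 * (t^8) powr (1/4) * Cmin n0 g k0 \<beta>0 / 6"
    show "miss_event n0 n g k0 \<beta>0 \<sigma>0 lam B \<in> sets (gauss_space n0 B)"
      by (rule sets_miss_event)
    show "measure (gauss_space n0 B) (miss_event n0 n g k0 \<beta>0 \<sigma>0 lam B)
        \<le> (1 - (t^8)^(n0 - 1) / real (n0 - 1))^B + \<delta>"
      using measure_miss_event_le_gamma[OF assms(2,3) n0(2,1) \<open>0 < \<sigma>0\<close> tM lo hi, of B] error \<open>0 < \<delta>\<close>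
      by linarith
  qed (use tM in simp)
qed

end
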